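(* Let $c<d$ be positive integers and let $X_{c,d}\subset\mathbb{P}^5$ be the threefold defined over $\overline{\mathbb{Q}}$ by $$x_0^c+x_1^c+x_2^c-x_3^c-x_4^c-x_5^c=0,\qquad x_0^d+x_1^d+x_2^d-x_3^d-x_4^d-x_5^d=0.$$ Then the singular locus of $X_{c,d}$ is finite. More precisely, if $[\xi_0,\dots,\xi_5]$ is a singular point of $X_{c,d}$ and $\xi_i,\xi_j$ are two non-zero coordinates, then $\xi_i^{2(d-c)}=\xi_j^{2(d-c)}$. *)

theory Defs
  imports Complex_Main "HOL-Computational_Algebra.Polynomial"
begin

text \<open>Points of P^5 over the algebraic closure of Q are represented by their
homogeneous coordinate vectors x 0, ..., x 5 (a function nat => complex, only
indices below 6 matter), all of whose coordinates are algebraic numbers, not all zero.\<close>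

definition sgn6 :: "nat \<Rightarrow> complex" where
  "sgn6 i = (if i < 3 then 1 else -1)"

definition Fk :: "nat \<Rightarrow> (nat \<Rightarrow> complex) \<Rightarrow> complex" where
  "Fk k x = (\<Sum>i<6. sgn6 i * x i ^ k)"

definition dFk :: "nat \<Rightarrow> (nat \<Rightarrow> complex) \<Rightarrow> nat \<Rightarrow> complex" where
  "dFk k x i = of_nat k * sgn6 i * x i ^ (k - 1)"

definition qbar_proj_point :: "(nat \<Rightarrow> complex) \<Rightarrow> bool" where
  "qbar_proj_point x \<longleftrightarrow> (\<exists>i<6. x i \<noteq> 0) \<and> (\<forall>i<6. algebraic (x i))"

definition on_X :: "nat \<Rightarrow> nat \<Rightarrow> (nat \<Rightarrow> complex) \<Rightarrow> bool" where
  "on_X c d x \<longleftrightarrow> qbar_proj_point x \<and> Fk c x = 0 \<and> Fk d x = 0"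

text \<open>Singular point of the (codimension 2 complete intersection) X_{c,d}:
a point of X where the 2x6 Jacobian matrix has rank < 2, i.e. all 2x2 minors vanish.\<close>
definition singular_X :: "nat \<Rightarrow> nat \<Rightarrow> (nat \<Rightarrow> complex) \<Rightarrow> bool" where
  "singular_X c d x \<longleftrightarrow> on_X c d x \<and>
     (\<forall>i<6. \<forall>j<6. dFk c x i * dFk d x j - dFk c x j * dFk d x i = 0)"

definition proj_eq :: "(nat \<Rightarrow> complex) \<Rightarrow> (nat \<Rightarrow> complex) \<Rightarrow> bool" where
  "proj_eq x y \<longleftrightarrow> (\<exists>l. l \<noteq> 0 \<and> (\<forall>i<6. y i = l * x i))"

end

theory Submission
  imports Defs
begin

text \<open>The (i, j) minor of the Jacobian of (F_c, F_d) factors as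
  c d s_i s_j (x_i x_j)^(c-1) (x_j^(d-c) - x_i^(d-c)), so at a singular point any two
  nonzero coordinates have the same (d-c)-th power. Dividing by one nonzero coordinate,
  every singular point is therefore represented by a vector whose entries are 0 or
  (d-c)-th roots of unity, and there are only finitely many of those.\<close>

lemma dFk_minor_factor:
  assumes "0 < c" "c \<le> d"
  shows "dFk c x i * dFk d x j - dFk c x j * dFk d x i =
    of_nat c * of_nat d * sgn6 i * sgn6 j * (x i * x j) ^ (c - 1) * (x j ^ (d - c) - x i ^ (d - c))"
proof -
  have exponent: "d - 1 = (c - 1) + (d - c)" using assms by simp
  show ?thesis
    unfolding dFk_def exponent power_add power_mult_distrib by (simp only: algebra_simps)
qed

lemma singular_X_coord_power_eq:
  assumes "0 < c" "c \<le> d" "singular_X c d x"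
    and "i < 6" "j < 6" "x i \<noteq> 0" "x j \<noteq> 0"
  shows "x i ^ (d - c) = x j ^ (d - c)"
proof -
  have "dFk c x i * dFk d x j - dFk c x j * dFk d x i = 0"
    using assms(3-5) unfolding singular_X_def by blast
  then have minor: "of_nat c * of_nat d * sgn6 i * sgn6 j * (x i * x j) ^ (c - 1) *
      (x j ^ (d - c) - x i ^ (d - c)) = 0"
    by (simp only: dFk_minor_factor[OF assms(1,2)])
  have "of_nat c * of_nat d * sgn6 i * sgn6 j * (x i * x j) ^ (c - 1) \<noteq> (0::complex)"
    using assms(1,2,6,7) by (simp add: sgn6_def)
  with minor have "x j ^ (d - c) - x i ^ (d - c) = 0" by (metis mult_eq_0_iff)
  then show ?thesis by simp
qed

lemma finite_proj_classes_if_coord_powers_eq: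
  fixes P :: "(nat \<Rightarrow> complex) \<Rightarrow> bool"
  assumes "0 < m"
    and nonzero: "\<And>x. P x \<Longrightarrow> \<exists>k<6. x k \<noteq> 0"
    and powers_eq: "\<And>x i j. P x \<Longrightarrow> i < 6 \<Longrightarrow> j < 6 \<Longrightarrow> x i \<noteq> 0 \<Longrightarrow> x j \<noteq> 0 \<Longrightarrow>
      x i ^ m = x j ^ m"
  shows "\<exists>S. finite S \<and> (\<forall>x. P x \<longrightarrow> (\<exists>y\<in>S. proj_eq y x))"
proof (intro exI conjI allI impI)
  define R where "R = insert 0 {z::complex. z ^ m = 1}"
  define S where "S = {y. \<forall>i. (i \<in> {..<6::nat} \<longrightarrow> y i \<in> R) \<and> (i \<notin> {..<6} \<longrightarrow> y i = 0)}"
  have "finite R"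
    unfolding R_def using \<open>0 < m\<close> by (simp add: finite_roots_unity)
  then show "finite S"
    unfolding S_def by (intro finite_set_of_finite_funs) auto
  fix x assume "P x"
  then obtain k where k: "k < 6" "x k \<noteq> 0" using nonzero by blast
  define y where "y i = (if i < 6 then x i / x k else 0)" for i
  have "y i \<in> R" if "i < 6" for i
    using powers_eq[OF \<open>P x\<close> that k(1) _ k(2)] that k(2)
    by (cases "x i = 0") (auto simp: y_def R_def power_divide)
  then have "y \<in> S" by (auto simp: S_def y_def)
  moreover have "proj_eq y x"
    unfolding proj_eq_def using k by (intro exI[of _ "x k"]) (simp add: y_def)
  ultimately show "\<exists>y\<in>S. proj_eq y x" by blast
qed

theorem mainTheorem4:
  fixes c d :: nat
  assumes "0 < c" and "c < d"
  shows "(\<exists>S. finite S \<and> (\<forall>x. singular_X c d x \<longrightarrow> (\<exists>y\<in>S. proj_eq y x)))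
       \<and> (\<forall>x. singular_X c d x \<longrightarrow>
            (\<forall>i<6. \<forall>j<6. x i \<noteq> 0 \<longrightarrow> x j \<noteq> 0 \<longrightarrow>
               x i ^ (2 * (d - c)) = x j ^ (2 * (d - c))))"
proof
  have "c \<le> d" using assms(2) by simp
  note power_eq = singular_X_coord_power_eq[OF assms(1) this]
  show "\<exists>S. finite S \<and> (\<forall>x. singular_X c d x \<longrightarrow> (\<exists>y\<in>S. proj_eq y x))"
  proof (rule finite_proj_classes_if_coord_powers_eq)
    show "0 < d - c" using assms(2) by simp
    show "\<exists>k<6. x k \<noteq> 0" if "singular_X c d x" for x
      using that unfolding singular_X_def on_X_def qbar_proj_point_def by blast
  qed (rule power_eq)
  show "\<forall>x. singular_X c d x \<longrightarrow>
            (\<forall>i<6. \<forall>j<6. x i \<noteq> 0 \<longrightarrow> x j \<noteq> 0 \<longrightarrow>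
               x i ^ (2 * (d - c)) = x j ^ (2 * (d - c)))"
  proof (intro allI impI)
    fix x i j assume "singular_X c d x" "i < 6" "j < 6" "x i \<noteq> 0" "x j \<noteq> 0"
    then have "x i ^ (d - c) = x j ^ (d - c)" by (rule power_eq)
    then show "x i ^ (2 * (d - c)) = x j ^ (2 * (d - c))"
      by (metis power_mult mult.commute)
  qed
qed

end
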